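(* Let $G$ be an abelian group with torsion subgroup $T$. If both $T$ and $G/T$ are strongly co-Hopfian, then $G$ is strongly co-Hopfian.
   Context: All groups are abelian. A group $G$ is strongly co-Hopfian if for every endomorphism $f$ of $G$ there is $n\in\mathbb N$ with $f^n(G)=f^{n+1}(G)$. $T$ denotes the maximal torsion subgroup of $G$. *)

theory Defs
  imports "HOL-Algebra.Algebra"
begin

definition torsion :: "('a, 'b) monoid_scheme \<Rightarrow> 'a set" where
  "torsion G = {x \<in> carrier G. \<exists>n::nat. n > 0 \<and> x [^]\<^bsub>G\<^esub> n = \<one>\<^bsub>G\<^esub>}"

definition strongly_co_hopfian :: "('a, 'b) monoid_scheme \<Rightarrow> bool" where
  "strongly_co_hopfian G \<longleftrightarrow>
     (\<forall>f \<in> hom G G. \<exists>n::nat. (f ^^ n) ` carrier G = (f ^^ Suc n) ` carrier G)"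

end

theory Submission
  imports Defs
begin

text \<open>Let \<open>f\<close> be an endomorphism of \<open>G\<close>. Since \<open>T\<close> is fully invariant, \<open>f\<close> restricts to
  \<open>T\<close> and induces an endomorphism of \<open>G/T\<close>; choose \<open>a\<close> and \<open>b\<close> at which these stabilize.
  Once stable, the images stay stable, so \<open>f^a(T) = f^(a+b+1)(T)\<close>, while stability modulo
  \<open>T\<close> says \<open>f^b(G) \<subseteq> T f^(b+1)(G)\<close>. Applying \<open>f^a\<close> gives
  \<open>f^(a+b)(G) \<subseteq> f^a(T) f^(a+b+1)(G) = f^(a+b+1)(T) f^(a+b+1)(G) \<subseteq> f^(a+b+1)(G)\<close>.\<close>

lemma funpow_image_stable:
  fixes f :: "'a \<Rightarrow> 'a"
  assumes "(f ^^ n) ` A = (f ^^ Suc n) ` A"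
  shows "(f ^^ (n + k)) ` A = (f ^^ n) ` A"
proof (induction k)
  case 0
  show ?case by simp
next
  case (Suc k)
  have "f ^^ (n + Suc k) = f ^^ k \<circ> f ^^ Suc n" and "f ^^ (n + k) = f ^^ k \<circ> f ^^ n"
    unfolding funpow_add[symmetric] by (simp_all add: ac_simps)
  then have "(f ^^ (n + Suc k)) ` A = (f ^^ (n + k)) ` A"
    using assms by (simp only: image_comp[symmetric])
  then show ?case
    using Suc.IH by simp
qed

lemma funpow_Suc_image_subset:
  fixes f :: "'a \<Rightarrow> 'a"
  assumes "f ` A \<subseteq> A"
  shows "(f ^^ Suc n) ` A \<subseteq> (f ^^ n) ` A"
  using image_mono[OF assms, of "f ^^ n"] by (simp add: image_comp funpow_swap1)

lemma hom_funpow: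
  assumes "f \<in> hom G G"
  shows "f ^^ n \<in> hom G G"
proof (induction n)
  case 0
  show ?case by (simp add: hom_def)
next
  case (Suc n)
  show ?case using hom_compose[OF Suc.IH assms] by (simp only: funpow.simps(2))
qed

lemma hom_image_torsion_subset:
  assumes "group G" "group H" "f \<in> hom G H"
  shows "f ` torsion G \<subseteq> torsion H"
proof
  fix y assume "y \<in> f ` torsion G"
  then obtain x where tx: "x \<in> torsion G" and y: "y = f x"
    by blast
  then have x: "x \<in> carrier G"
    by (simp add: torsion_def)
  obtain n :: nat where n: "n > 0" "x [^]\<^bsub>G\<^esub> n = \<one>\<^bsub>G\<^esub>"
    using tx by (auto simp: torsion_def)
  have "y [^]\<^bsub>H\<^esub> n = f (x [^]\<^bsub>G\<^esub> n)"
    using hom_nat_pow[OF assms(3) x assms(1,2)] y by simp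
  also have "\<dots> = \<one>\<^bsub>H\<^esub>"
    using n(2) hom_one[OF assms(3) assms(1,2)] by simp
  finally show "y \<in> torsion H"
    using n(1) x y hom_in_carrier[OF assms(3)] by (auto simp: torsion_def)
qed

lemma (in comm_group) subgroup_torsion: "subgroup (torsion G) G"
proof
  show "torsion G \<subseteq> carrier G"
    by (auto simp: torsion_def)
  show "\<one> \<in> torsion G"
    using one_closed nat_pow_one[of 1] by (auto simp: torsion_def)
next
  fix x y assume "x \<in> torsion G" "y \<in> torsion G"
  then obtain n m :: nat where x: "x \<in> carrier G" "n > 0" "x [^] n = \<one>"
    and y: "y \<in> carrier G" "m > 0" "y [^] m = \<one>"
    by (auto simp: torsion_def)
  have "(x \<otimes> y) [^] (n * m) = (x [^] n) [^] m \<otimes> (y [^] m) [^] n"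
    using pow_mult_distrib[OF m_comm x(1) y(1)] x(1) y(1)
    by (simp add: nat_pow_pow mult.commute)
  then have "(x \<otimes> y) [^] (n * m) = \<one>"
    using x(3) y(3) by simp
  then show "x \<otimes> y \<in> torsion G"
    using x y by (auto simp: torsion_def intro!: exI[of _ "n * m"])
next
  fix x assume "x \<in> torsion G"
  then obtain n :: nat where x: "x \<in> carrier G" "n > 0" "x [^] n = \<one>"
    by (auto simp: torsion_def)
  then have "inv x [^] n = \<one>"
    by (simp add: nat_pow_inv)
  then show "inv x \<in> torsion G"
    using x by (auto simp: torsion_def)
qed

text \<open>\<open>SOME\<close> picks a representative of the coset \<open>C\<close>; the result does not depend on the
  choice as long as \<open>f ` N \<subseteq> N\<close>.\<close>
definition quotient_endo :: "('a, 'b) monoid_scheme \<Rightarrow> 'a set \<Rightarrow> ('a \<Rightarrow> 'a) \<Rightarrow> 'a set \<Rightarrow> 'a set"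
  where "quotient_endo G N f C = N #>\<^bsub>G\<^esub> f (SOME x. x \<in> C)"

context group
begin

lemma quotient_endo_rcos:
  assumes N: "subgroup N G" and f: "f \<in> hom G G" "f ` N \<subseteq> N" and x: "x \<in> carrier G"
  shows "quotient_endo G N f (N #> x) = N #> f x"
proof -
  define y where "y = (SOME y. y \<in> N #> x)"
  have "y \<in> N #> x"
    unfolding y_def using rcos_self[OF x N] by (rule someI)
  then obtain t where t: "t \<in> N" "y = t \<otimes> x"
    by (auto simp: r_coset_def)
  have tc: "t \<in> carrier G"
    using t(1) subgroup.subset[OF N] by blast
  have "f y = f t \<otimes> f x"
    using t(2) hom_mult[OF f(1) tc x] by simp
  moreover have "f t \<in> N"
    using f(2) t(1) by blast
  ultimately have "f y \<in> N #> f x"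
    by (auto simp: r_coset_def)
  then have "N #> f x = N #> f y"
    using repr_independence hom_in_carrier[OF f(1) x] N by blast
  then show ?thesis
    by (simp add: quotient_endo_def y_def)
qed

lemma funpow_quotient_endo_rcos:
  assumes "subgroup N G" "f \<in> hom G G" "f ` N \<subseteq> N" "x \<in> carrier G"
  shows "(quotient_endo G N f ^^ n) (N #> x) = N #> (f ^^ n) x"
proof (induction n)
  case 0
  show ?case by simp
next
  case (Suc n)
  have "(f ^^ n) x \<in> carrier G"
    using hom_in_carrier[OF hom_funpow[OF assms(2)] assms(4)] .
  then show ?case
    using Suc.IH quotient_endo_rcos[OF assms(1-3)] by simp
qed

lemma quotient_endo_hom:
  assumes N: "N \<lhd> G" and f: "f \<in> hom G G" "f ` N \<subseteq> N"
  shows "quotient_endo G N f \<in> hom (G Mod N) (G Mod N)"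
proof -
  have N_sub: "subgroup N G"
    using N by (rule normal_imp_subgroup)
  have "N #> f x \<in> carrier (G Mod N)" if "x \<in> carrier G" for x
    using that hom_in_carrier[OF f(1)] by (simp add: carrier_FactGroup)
  moreover have "N #> f (x \<otimes> y) = (N #> f x) <#> (N #> f y)"
    if "x \<in> carrier G" "y \<in> carrier G" for x y
    using that hom_in_carrier[OF f(1)] hom_mult[OF f(1)] normal.rcos_sum[OF N] by simp
  ultimately show ?thesis
    using quotient_endo_rcos[OF N_sub f] normal.rcos_sum[OF N]
    by (auto simp: hom_def carrier_FactGroup)
qed

lemma quotient_endo_stable_imp_decompose:
  assumes N: "subgroup N G" and f: "f \<in> hom G G" "f ` N \<subseteq> N"
    and stable: "(quotient_endo G N f ^^ b) ` carrier (G Mod N)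
                 = (quotient_endo G N f ^^ Suc b) ` carrier (G Mod N)"
    and x: "x \<in> carrier G"
  shows "\<exists>t\<in>N. \<exists>z\<in>carrier G. (f ^^ b) x = t \<otimes> (f ^^ Suc b) z"
proof -
  let ?F = "quotient_endo G N f"
  have "(?F ^^ b) (N #> x) \<in> (?F ^^ Suc b) ` carrier (G Mod N)"
    using stable x unfolding carrier_FactGroup by blast
  then obtain z where z: "z \<in> carrier G" "(?F ^^ b) (N #> x) = (?F ^^ Suc b) (N #> z)"
    unfolding carrier_FactGroup by blast
  then have cosets_eq: "N #> (f ^^ b) x = N #> (f ^^ Suc b) z"
    by (simp only: funpow_quotient_endo_rcos[OF N f] x)
  have "(f ^^ b) x \<in> N #> (f ^^ b) x"
    using rcos_self[OF hom_in_carrier[OF hom_funpow[OF f(1)] x] N] .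
  then have "(f ^^ b) x \<in> N #> (f ^^ Suc b) z"
    by (simp only: cosets_eq)
  then show ?thesis
    using z(1) unfolding r_coset_def by blast
qed

lemma funpow_image_stable_of_subgroup_and_quotient:
  assumes N: "subgroup N G" and f: "f \<in> hom G G"
    and stable_N: "(f ^^ a) ` N = (f ^^ Suc a) ` N"
    and lift: "\<And>x. x \<in> carrier G \<Longrightarrow> \<exists>t\<in>N. \<exists>z\<in>carrier G. (f ^^ b) x = t \<otimes> (f ^^ Suc b) z"
  shows "(f ^^ (a + b)) ` carrier G = (f ^^ Suc (a + b)) ` carrier G"
proof
  show "(f ^^ Suc (a + b)) ` carrier G \<subseteq> (f ^^ (a + b)) ` carrier G"
    using hom_carrier[OF f] by (rule funpow_Suc_image_subset)
next
  show "(f ^^ (a + b)) ` carrier G \<subseteq> (f ^^ Suc (a + b)) ` carrier G"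
  proof
    fix y assume "y \<in> (f ^^ (a + b)) ` carrier G"
    then obtain x where x: "x \<in> carrier G" "y = (f ^^ a) ((f ^^ b) x)"
      by (auto simp: funpow_add)
    obtain t z where t: "t \<in> N" and z: "z \<in> carrier G" and tz: "(f ^^ b) x = t \<otimes> (f ^^ Suc b) z"
      using lift[OF x(1)] by blast
    have "(f ^^ a) t \<in> (f ^^ (a + Suc b)) ` N"
      using t funpow_image_stable[OF stable_N, of "Suc b"] by blast
    then obtain s where s: "s \<in> N" "(f ^^ a) t = (f ^^ Suc (a + b)) s"
      by auto
    have sc: "s \<in> carrier G" and tc: "t \<in> carrier G"
      using s(1) t subgroup.subset[OF N] by auto
    have shift: "(f ^^ a) ((f ^^ Suc b) z) = (f ^^ Suc (a + b)) z"
      by (metis add_Suc_right comp_apply funpow_add)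
    have "y = (f ^^ a) t \<otimes> (f ^^ a) ((f ^^ Suc b) z)"
      unfolding x(2) tz by (rule hom_mult[OF hom_funpow[OF f] tc hom_in_carrier[OF hom_funpow[OF f] z]])
    also have "\<dots> = (f ^^ Suc (a + b)) s \<otimes> (f ^^ Suc (a + b)) z"
      by (simp only: s(2) shift)
    also have "\<dots> = (f ^^ Suc (a + b)) (s \<otimes> z)"
      using hom_mult[OF hom_funpow[OF f] sc z] by (rule sym)
    finally show "y \<in> (f ^^ Suc (a + b)) ` carrier G"
      using sc z by blast
  qed
qed

lemma strongly_co_hopfian_extension:
  assumes N: "N \<lhd> G" and invariant: "\<And>f. f \<in> hom G G \<Longrightarrow> f ` N \<subseteq> N"
    and sch_N: "strongly_co_hopfian (G\<lparr>carrier := N\<rparr>)"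
    and sch_Mod: "strongly_co_hopfian (G Mod N)"
  shows "strongly_co_hopfian G"
  unfolding strongly_co_hopfian_def
proof
  fix f assume f: "f \<in> hom G G"
  have N_sub: "subgroup N G"
    using N by (rule normal_imp_subgroup)
  have fN: "f ` N \<subseteq> N"
    using invariant[OF f] .
  have "f \<in> hom (G\<lparr>carrier := N\<rparr>) (G\<lparr>carrier := N\<rparr>)"
    unfolding hom_def using fN hom_mult[OF f] subgroup.mem_carrier[OF N_sub] by auto
  then obtain a where a: "(f ^^ a) ` N = (f ^^ Suc a) ` N"
    using sch_N by (auto simp: strongly_co_hopfian_def)
  obtain b where b: "(quotient_endo G N f ^^ b) ` carrier (G Mod N)
                     = (quotient_endo G N f ^^ Suc b) ` carrier (G Mod N)"
    using sch_Mod quotient_endo_hom[OF N f fN] by (auto simp: strongly_co_hopfian_def)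
  show "\<exists>n. (f ^^ n) ` carrier G = (f ^^ Suc n) ` carrier G"
    using funpow_image_stable_of_subgroup_and_quotient[OF N_sub f a
        quotient_endo_stable_imp_decompose[OF N_sub f fN b]] by blast
qed

end

theorem mainTheorem4:
  fixes G :: "('a, 'b) monoid_scheme"
  assumes "comm_group G"
    and "strongly_co_hopfian (G\<lparr>carrier := torsion G\<rparr>)"
    and "strongly_co_hopfian (G Mod torsion G)"
  shows "strongly_co_hopfian G"
proof -
  interpret comm_group G by (rule assms(1))
  have "torsion G \<lhd> G"
    using subgroup_torsion by (rule subgroup_imp_normal)
  moreover have "f ` torsion G \<subseteq> torsion G" if "f \<in> hom G G" for f
    using hom_image_torsion_subset[OF is_group is_group that] .
  ultimately show ?thesis
    using strongly_co_hopfian_extension assms(2,3) by blast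
qed

end
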